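(* The Doob--Martin kernel of $(U_n)_{n \in \mathbb{N}_0}$ with reference state the empty word satisfies, for all $m,n\in\mathbb{N}_0$, $v \in \mathbb{W}_m$ and $w \in \mathbb{W}_{m+n}$, \[ K(v,w) = \binom{w}{v} \frac{\binom{2m}{m}}{\binom{m+n}{m}^2}. \]
   Context: For $n \in \mathbb{N}_0$, $\mathbb{W}_n$ denotes the set of words over the alphabet $\{a,b\}$ with exactly $n$ letters $a$ and $n$ letters $b$, and $\mathbb{W} := \bigsqcup_{n} \mathbb{W}_n$. For words $w,v$, $\binom{w}{v}$ denotes the number of occurrences of $v$ as a (not necessarily contiguous) sub-word of $w$. The Markov chain $(U_n)_{n\in\mathbb{N}_0}$ on $\mathbb{W}$ starts at the empty word $\emptyset$; given $U_n \in \mathbb{W}_n$, first a letter $a$ is inserted uniformly at random into one of the $2n+1$ slots of $U_n$, then a letter $b$ is inserted uniformly at random into one of the $2n+2$ slots of the resulting word, giving $U_{n+1}$. The Doob--Martin kernel with reference state $\emptyset$ is $K(v,w) := \mathbb{P}^v\{\text{the chain hits } w\}/\mathbb{P}^\emptyset\{\text{the chain hits } w\}$; for $v\in\mathbb{W}_m$, $w\in\mathbb{W}_{m+n}$ this equals $\mathbb{P}\{U_{m+n}=w\mid U_m=v\}/\mathbb{P}\{U_{m+n}=w\mid U_0=\emptyset\}$. *)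

theory Defs
  imports Complex_Main
begin

datatype letter = A | B

type_synonym word = "letter list"

definition W :: "nat \<Rightarrow> word set" where
  "W n = {w. count_list w A = n \<and> count_list w B = n \<and> length w = 2 * n}"

definition subword_count :: "word \<Rightarrow> word \<Rightarrow> nat" where
  "subword_count w v =
     card {I. I \<subseteq> {..<length w} \<and> card I = length v \<and> nths w I = v}"

definition ins_at :: "nat \<Rightarrow> letter \<Rightarrow> word \<Rightarrow> word" where
  "ins_at i x xs = take i xs @ x # drop i xs"

text \<open>k-step transition probabilities of the chain: from u, insert A uniformly into one of
  the length u + 1 slots, then B uniformly into one of the length u + 2 slots.\<close>
fun trans :: "nat \<Rightarrow> word \<Rightarrow> word \<Rightarrow> real" where
  "trans 0 u w = (if u = w then 1 else 0)"
| "trans (Suc k) u w =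
     (\<Sum>i\<le>length u. \<Sum>j\<le>Suc (length u). trans k (ins_at j B (ins_at i A u)) w)
       / (real (length u + 1) * real (length u + 2))"

text \<open>Probability that the chain started at u ever hits w. Since the length grows by
  exactly 2 at each step, w can only be hit at the single time (|w|-|u|)/2.\<close>
definition hit_prob :: "word \<Rightarrow> word \<Rightarrow> real" where
  "hit_prob u w = (if length u \<le> length w \<and> even (length w - length u)
                   then trans ((length w - length u) div 2) u w else 0)"

definition martin_K :: "word \<Rightarrow> word \<Rightarrow> real" where
  "martin_K v w = hit_prob v w / hit_prob [] w"

end

theory Submission imports Defs begin

text \<open>
  Write \<open>o(w,u)\<close> for the number of occurrences of \<open>u\<close> as a sub-word of \<open>w\<close>. Summing
  \<open>o(w,u')\<close> over the words \<open>u'\<close> obtained by inserting a letter \<open>x\<close> into the slots of \<open>u\<close>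
  counts pairs (occurrence of \<open>u\<close>, unused letter \<open>x\<close> of \<open>w\<close>), so it equals
  \<open>(#\<^sub>x w - #\<^sub>x u) o(w,u)\<close>. One step of the chain inserts an \<open>a\<close> and then a \<open>b\<close>; if \<open>w\<close> has
  \<open>k\<close> letters of each kind more than \<open>u\<close>, this turns \<open>o(w,\<cdot>)\<close> into \<open>k\<^sup>2 o(w,\<cdot>)\<close>, and
  induction on \<open>k\<close> gives \<open>P(u \<rightarrow> w) = o(w,u) (k!)\<^sup>2 |u|! / |w|!\<close>. Dividing the instance
  \<open>u = v\<close> by the instance \<open>u = \<emptyset>\<close> yields the kernel.
\<close>

fun subseq_count :: "'a list \<Rightarrow> 'a list \<Rightarrow> nat" where
  "subseq_count [] v = (if v = [] then 1 else 0)"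
| "subseq_count (x # xs) [] = subseq_count xs []"
| "subseq_count (x # xs) (y # ys) =
     subseq_count xs (y # ys) + (if x = y then subseq_count xs ys else 0)"

lemma subseq_count_Nil_right [simp]: "subseq_count w [] = 1"
  by (induction w) auto

lemma subseq_count_too_long: "length w < length v \<Longrightarrow> subseq_count w v = 0"
  by (induction w v rule: subseq_count.induct) auto

lemma subseq_count_same_length:
  "length w = length v \<Longrightarrow> subseq_count w v = (if w = v then 1 else 0)"
  by (induction w v rule: subseq_count.induct) (auto simp: subseq_count_too_long)

definition subseq_index_sets :: "'a list \<Rightarrow> 'a list \<Rightarrow> nat set set" where
  "subseq_index_sets w v = {I. I \<subseteq> {..<length w} \<and> card I = length v \<and> nths w I = v}"

lemma finite_subseq_index_sets: "finite (subseq_index_sets w v)"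
  by (rule finite_subset[of _ "Pow {..<length w}"]) (auto simp: subseq_index_sets_def)

lemma subseq_index_sets_Nil: "subseq_index_sets [] v = (if v = [] then {{}} else {})"
  by (auto simp: subseq_index_sets_def)

lemma shift_index_set_eq:
  "I = (if 0 \<in> I then insert 0 else id) (Suc ` {j. Suc j \<in> I})"
  by (auto simp: image_iff) (metis not0_implies_Suc)+

lemma subseq_index_sets_Cons_skip:
  "{I \<in> subseq_index_sets (x # xs) v. 0 \<notin> I} = (`) Suc ` subseq_index_sets xs v"
proof (intro equalityI subsetI)
  fix I assume I: "I \<in> {I \<in> subseq_index_sets (x # xs) v. 0 \<notin> I}"
  define J where "J = {j. Suc j \<in> I}"
  have I_eq: "I = Suc ` J"
    using I shift_index_set_eq[of I] by (simp add: J_def)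
  then have "card J = card I" by (simp add: card_image)
  with I have "J \<in> subseq_index_sets xs v"
    by (auto simp: subseq_index_sets_def nths_Cons J_def)
  with I_eq show "I \<in> (`) Suc ` subseq_index_sets xs v" by blast
next
  fix I assume "I \<in> (`) Suc ` subseq_index_sets xs v"
  then obtain J where J: "J \<in> subseq_index_sets xs v" and I_eq: "I = Suc ` J" by auto
  have "card I = card J" using I_eq by (simp add: card_image)
  with J I_eq show "I \<in> {I \<in> subseq_index_sets (x # xs) v. 0 \<notin> I}"
    by (auto simp: subseq_index_sets_def nths_Cons image_iff)
qed

lemma subseq_index_sets_Cons_take:
  "{I \<in> subseq_index_sets (x # xs) (y # ys). 0 \<in> I} =
     (if x = y then (\<lambda>J. insert 0 (Suc ` J)) ` subseq_index_sets xs ys else {})"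
proof (intro equalityI subsetI)
  fix I assume "I \<in> {I \<in> subseq_index_sets (x # xs) (y # ys). 0 \<in> I}"
  then have I: "I \<subseteq> {..<Suc (length xs)}" "card I = Suc (length ys)"
    "nths (x # xs) I = y # ys" "0 \<in> I"
    by (auto simp: subseq_index_sets_def)
  define J where "J = {j. Suc j \<in> I}"
  have I_eq: "I = insert 0 (Suc ` J)"
    using I shift_index_set_eq[of I] by (simp add: J_def)
  have "J \<subseteq> {..<length xs}" using I(1) by (auto simp: J_def)
  moreover from this have "card J = length ys"
    using I(2) by (simp add: I_eq card_image finite_subset)
  moreover have "x = y" "nths xs J = ys" using I(3,4) by (simp_all add: nths_Cons J_def)
  ultimately show "I \<in> (if x = y then (\<lambda>J. insert 0 (Suc ` J)) ` subseq_index_sets xs ys else {})"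
    using I_eq by (auto simp: subseq_index_sets_def)
next
  fix I assume "I \<in> (if x = y then (\<lambda>J. insert 0 (Suc ` J)) ` subseq_index_sets xs ys else {})"
  then obtain J where xy: "x = y" and J: "J \<subseteq> {..<length xs}" "card J = length ys" "nths xs J = ys"
    and I_eq: "I = insert 0 (Suc ` J)"
    by (auto simp: subseq_index_sets_def split: if_splits)
  have "card I = Suc (card J)" using J(1) by (simp add: I_eq card_image finite_subset)
  moreover have "{j. Suc j \<in> I} = J" by (auto simp: I_eq)
  moreover have "I \<subseteq> {..<Suc (length xs)}" using J(1) by (auto simp: I_eq)
  ultimately show "I \<in> {I \<in> subseq_index_sets (x # xs) (y # ys). 0 \<in> I}"
    using xy J I_eq by (simp add: subseq_index_sets_def nths_Cons)
qed

lemma card_subseq_index_sets: "card (subseq_index_sets w v) = subseq_count w v"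
proof (induction w arbitrary: v)
  case Nil
  then show ?case by (simp add: subseq_index_sets_Nil)
next
  case (Cons x xs)
  let ?S = "subseq_index_sets (x # xs) v"
  have "?S = {I \<in> ?S. 0 \<notin> I} \<union> {I \<in> ?S. 0 \<in> I}" by auto
  then have "card ?S = card {I \<in> ?S. 0 \<notin> I} + card {I \<in> ?S. 0 \<in> I}"
    by (metis (no_types, lifting) card_Un_disjoint finite_subseq_index_sets finite_Un disjoint_iff mem_Collect_eq)
  moreover have "card {I \<in> ?S. 0 \<notin> I} = subseq_count xs v"
    unfolding subseq_index_sets_Cons_skip
    by (subst card_image) (auto simp: inj_on_def inj_image_eq_iff Cons.IH)
  moreover have "card {I \<in> ?S. 0 \<in> I} =
      (case v of [] \<Rightarrow> 0 | y # ys \<Rightarrow> if x = y then subseq_count xs ys else 0)"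
  proof (cases v)
    case Nil
    then show ?thesis
      by (auto simp: subseq_index_sets_def card_eq_0_iff dest: finite_subset[OF _ finite_lessThan])
  next
    case (Cons y ys)
    have "inj_on (\<lambda>J. insert 0 (Suc ` J)) (subseq_index_sets xs ys)"
      by (rule inj_on_inverseI[where g = "\<lambda>I. {j. Suc j \<in> I}"]) auto
    with Cons show ?thesis
      by (simp add: subseq_index_sets_Cons_take card_image Cons.IH)
  qed
  ultimately show ?case by (cases v) auto
qed

lemma subword_count_eq_subseq_count: "subword_count w v = subseq_count w v"
  using card_subseq_index_sets by (simp add: subword_count_def subseq_index_sets_def)

lemma ins_at_0 [simp]: "ins_at 0 x u = x # u"
  by (simp add: ins_at_def)

lemma ins_at_Suc_Cons [simp]: "ins_at (Suc i) x (y # u) = y # ins_at i x u"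
  by (simp add: ins_at_def)

lemma length_ins_at: "i \<le> length u \<Longrightarrow> length (ins_at i x u) = Suc (length u)"
  by (simp add: ins_at_def)

lemma count_list_ins_at:
  "count_list (ins_at i x u) z = count_list u z + (if x = z then 1 else 0)"
proof -
  have "count_list u z = count_list (take i u) z + count_list (drop i u) z"
    by (metis append_take_drop_id count_list_append)
  then show ?thesis by (simp add: ins_at_def)
qed

lemma sum_subseq_count_ins_at:
  "(\<Sum>i\<le>length u. subseq_count w (ins_at i x u)) + count_list u x * subseq_count w u =
     count_list w x * subseq_count w u"
proof (induction w arbitrary: u)
  case Nil
  then show ?case by (simp add: ins_at_def)
next
  case (Cons c w)
  let ?S = "\<lambda>w u. \<Sum>i\<le>length u. subseq_count w (ins_at i x u)"
  show ?case
  proof (cases u)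
    case Nil
    then show ?thesis using Cons.IH[of "[]"] by simp
  next
    case (Cons y u')
    have "?S (c # w) u = ?S w u + (if c = x then subseq_count w u else 0)
        + (if c = y then ?S w u' else 0)"
      using Cons by (simp add: sum.atMost_Suc_shift sum.distrib del: sum.atMost_Suc)
    then show ?thesis
      using Cons Cons.IH[of u] Cons.IH[of u'] by (auto simp: algebra_simps)
  qed
qed

lemma sum_subseq_count_ins_at_eq:
  assumes "count_list w x = count_list u x + k"
  shows "(\<Sum>i\<le>length u. subseq_count w (ins_at i x u)) = k * subseq_count w u"
  using sum_subseq_count_ins_at[where u = u and w = w and x = x] assms by (simp add: algebra_simps)

lemma sum_subseq_count_ins_at_A_B:
  assumes "count_list w A = count_list u A + k" and "count_list w B = count_list u B + k"
  shows "(\<Sum>i\<le>length u. \<Sum>j\<le>Suc (length u). subseq_count w (ins_at j B (ins_at i A u)))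
     = k\<^sup>2 * subseq_count w u"
proof -
  have "(\<Sum>j\<le>Suc (length u). subseq_count w (ins_at j B (ins_at i A u)))
      = k * subseq_count w (ins_at i A u)" if "i \<le> length u" for i
    using sum_subseq_count_ins_at_eq[of w B "ins_at i A u" k] that assms(2)
    by (simp add: length_ins_at count_list_ins_at)
  then have "(\<Sum>i\<le>length u. \<Sum>j\<le>Suc (length u). subseq_count w (ins_at j B (ins_at i A u)))
      = k * (\<Sum>i\<le>length u. subseq_count w (ins_at i A u))"
    by (simp add: sum_distrib_left)
  also have "\<dots> = k\<^sup>2 * subseq_count w u"
    using sum_subseq_count_ins_at_eq[OF assms(1)] by (simp add: power2_eq_square)
  finally show ?thesis .
qed

lemma trans_eq_subseq_count:
  assumes "length w = length u + 2 * k"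
    and "count_list w A = count_list u A + k" and "count_list w B = count_list u B + k"
  shows "trans k u w = real (subseq_count w u) * (fact k)\<^sup>2 * fact (length u) / fact (length w)"
  using assms
proof (induction k arbitrary: u)
  case 0
  then show ?case by (simp add: subseq_count_same_length)
next
  case (Suc k)
  define L where "L = length u"
  define C :: real where "C = (fact k)\<^sup>2 * fact (L + 2) / fact (length w)"
  have "trans k (ins_at j B (ins_at i A u)) w = real (subseq_count w (ins_at j B (ins_at i A u))) * C"
    if "i \<le> L" "j \<le> Suc L" for i j
    using Suc.IH[of "ins_at j B (ins_at i A u)"] Suc.prems that
    by (simp add: length_ins_at count_list_ins_at C_def L_def)
  then have "trans (Suc k) u w =
      (\<Sum>i\<le>L. \<Sum>j\<le>Suc L. real (subseq_count w (ins_at j B (ins_at i A u))) * C)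
        / (real (L + 1) * real (L + 2))"
    unfolding trans.simps L_def[symmetric]
    by (intro arg_cong2[where f = "(/)"] sum.cong refl) simp_all
  also have "\<dots> = (\<Sum>i\<le>L. \<Sum>j\<le>Suc L. real (subseq_count w (ins_at j B (ins_at i A u)))) * C
        / (real (L + 1) * real (L + 2))"
    by (simp only: sum_distrib_right)
  also have "\<dots> = (real (Suc k))\<^sup>2 * real (subseq_count w u) * C / (real (L + 1) * real (L + 2))"
    using sum_subseq_count_ins_at_A_B[of w u "Suc k"] Suc.prems
    by (simp add: L_def flip: of_nat_sum del: sum.atMost_Suc)
  also have "\<dots> = real (subseq_count w u) * (fact (Suc k))\<^sup>2 * fact L / fact (length w)"
  proof -
    have cancel: "q\<^sup>2 * s * (f\<^sup>2 * (a * b * g) / F) / (a * b) = s * (q * f)\<^sup>2 * g / F"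
      if "a \<noteq> 0" "b \<noteq> 0" for q s f g a b F :: real
      using that by (simp add: field_simps power2_eq_square)
    have fact_L2: "(fact (L + 2) :: real) = real (L + 1) * real (L + 2) * fact L"
      by (simp add: algebra_simps)
    show ?thesis
      unfolding C_def fact_Suc fact_L2 by (rule cancel) simp_all
  qed
  finally show ?case by (simp add: L_def)
qed

theorem mainTheorem2:
  fixes m n :: nat and v w :: word
  assumes "v \<in> W m" and "w \<in> W (m + n)"
  shows "martin_K v w =
    real (subword_count w v) * real ((2 * m) choose m) / (real ((m + n) choose m))^2"
proof -
  have v: "count_list v A = m" "count_list v B = m" "length v = 2 * m"
    using assms(1) by (auto simp: W_def)
  have w: "count_list w A = m + n" "count_list w B = m + n" "length w = 2 * m + 2 * n"
    using assms(2) by (auto simp: W_def)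
  have hit_v: "hit_prob v w = real (subword_count w v) * (fact n)\<^sup>2 * fact (2 * m) / fact (2 * m + 2 * n)"
    using trans_eq_subseq_count[of w v n] v w
    by (simp add: hit_prob_def subword_count_eq_subseq_count)
  have hit_Nil: "hit_prob [] w = (fact (m + n))\<^sup>2 / fact (2 * m + 2 * n)"
    using trans_eq_subseq_count[of w "[]" "m + n"] w by (simp add: hit_prob_def)
  have binom_2m: "real ((2 * m) choose m) = fact (2 * m) / (fact m * fact m)"
    by (simp add: binomial_fact mult_2)
  have binom_mn: "real ((m + n) choose m) = fact (m + n) / (fact m * fact n)"
    by (simp add: binomial_fact)
  show ?thesis
    unfolding martin_K_def hit_v hit_Nil binom_2m binom_mn by (simp add: field_simps power2_eq_square)
qed

end
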